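(* Consider Configuration III (two agents in mutual beacon-referenced pursuit, each referencing its own beacon, with $b>0$) with parameters $\mu>0$, $\lambda\in(0,1)$, $a\in[-1,1]$ and $a_0=0$. A circling equilibrium exists if and only if $a<0$, and at a circling equilibrium the shape variables satisfy $$\bar x_1=\bar x_2=0,\ \bar x_{1b1}=\bar x_{2b2}=0,\ \hat x_1=\hat x_2=0,\ \tilde x=-1,\ \rho=\frac{2}{(1-\lambda)\mu(-a)},\ \hat r_1=\hat r_2,\ \rho_{1b1}^2-\rho_{2b2}^2-2\hat r_1=0.$$
   Context: Two-agent setup: beacons $\mathbf r_{b1}=(0,0,-b)$, $\mathbf r_{b2}=(0,0,b)$ with $b\ge0$, $\hat{\mathbf b}=\mathbf r_{b2}-\mathbf r_{b1}=(0,0,2b)$. Agents $i=1,2$ have positions $\mathbf r_i\in\mathbb R^3$ and unit velocities $\mathbf x_i$. Let $\mathbf r=\mathbf r_1-\mathbf r_2$, $\mathbf r_{1b1}=\mathbf r_1-\mathbf r_{b1}$, $\mathbf r_{2b2}=\mathbf r_2-\mathbf r_{b2}$, $\rho=|\mathbf r|$, $\rho_{1b1}=|\mathbf r_{1b1}|$, $\rho_{2b2}=|\mathbf r_{2b2}|$, $\bar x_1=\mathbf x_1\cdot\mathbf r/\rho$, $\bar x_2=-\mathbf x_2\cdot\mathbf r/\rho$, $\bar x_{1b1}=\mathbf x_1\cdot\mathbf r_{1b1}/\rho_{1b1}$, $\bar x_{2b2}=\mathbf x_2\cdot\mathbf r_{2b2}/\rho_{2b2}$, $\tilde x=\mathbf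 x_1\cdot\mathbf x_2$, $\hat r_i=\mathbf r_i\cdot\hat{\mathbf b}$, $\hat x_i=\mathbf x_i\cdot\hat{\mathbf b}$. With gain $\mu>0$, weight $\lambda\in(0,1)$, common agent-bearing parameter $a\in[-1,1]$ and common beacon-bearing parameter $a_0\in[-1,1]$, the closed-loop dynamics are $\dot{\mathbf r}_i=\mathbf x_i$ and $$\dot{\mathbf x}_1=-(1-\lambda)\mu(\bar x_1-a)\Bigl(\tfrac{\mathbf r}{\rho}-\bar x_1\mathbf x_1\Bigr)-\lambda\mu(\bar x_{1b1}-a_0)\Bigl(\tfrac{\mathbf r_{1b1}}{\rho_{1b1}}-\bar x_{1b1}\mathbf x_1\Bigr),$$ $$\dot{\mathbf x}_2=-(1-\lambda)\mu(\bar x_2-a)\Bigl(-\tfrac{\mathbf r}{\rho}-\bar x_2\mathbf x_2\Bigr)-\lambda\mu(\bar x_{2b2}-a_0)\Bigl(\tfrac{\mathbf r_{2b2}}{\rho_{2b2}}-\bar x_{2b2}\mathbf x_2\Bigr).$$ The shape variables $(\bar x_1,\bar x_2,\bar x_{1b1},\bar x_{2b2},\tilde x,\rho,\rho_{1b1},\rho_{2b2},\hat r_1,\hat r_2,\hat x_1,\hat x_2)$ have time derivatives along this flow that depend only on the shape variables. A circling equilibrium is a state with $\rho,\rho_{1b1},\rho_{2b2}>0$ at which the time derivatives of all shape variables vanish. Configuration III is the case $b>0$ (two distinct beacons). *)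

theory Defs
  imports "HOL-Analysis.Analysis"
begin

text \<open>State of the two-agent system: (r1, r2, x1, x2), positions and (unit) velocities in R^3.\<close>
type_synonym state = "(real^3) \<times> (real^3) \<times> (real^3) \<times> (real^3)"

definition beacon1 :: "real \<Rightarrow> real^3" where
  "beacon1 b = vector [0, 0, - b]"

definition beacon2 :: "real \<Rightarrow> real^3" where
  "beacon2 b = vector [0, 0, b]"

definition bhat :: "real \<Rightarrow> real^3" where
  "bhat b = beacon2 b - beacon1 b"

definition field :: "real \<Rightarrow> real \<Rightarrow> real \<Rightarrow> real \<Rightarrow> real \<Rightarrow> state \<Rightarrow> state" where
  "field mu lam a a0 b s = (case s of (r1, r2, x1, x2) \<Rightarrow>
     (let r = r1 - r2; rho = norm r;
          r1b1 = r1 - beacon1 b; rho1b1 = norm r1b1;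
          r2b2 = r2 - beacon2 b; rho2b2 = norm r2b2;
          xb1 = (x1 \<bullet> r) / rho; xb2 = - (x2 \<bullet> r) / rho;
          xb1b1 = (x1 \<bullet> r1b1) / rho1b1; xb2b2 = (x2 \<bullet> r2b2) / rho2b2;
          dx1 = - ((1 - lam) * mu * (xb1 - a)) *\<^sub>R ((1 / rho) *\<^sub>R r - xb1 *\<^sub>R x1)
                - (lam * mu * (xb1b1 - a0)) *\<^sub>R ((1 / rho1b1) *\<^sub>R r1b1 - xb1b1 *\<^sub>R x1);
          dx2 = - ((1 - lam) * mu * (xb2 - a)) *\<^sub>R (- (1 / rho) *\<^sub>R r - xb2 *\<^sub>R x2)
                - (lam * mu * (xb2b2 - a0)) *\<^sub>R ((1 / rho2b2) *\<^sub>R r2b2 - xb2b2 *\<^sub>R x2)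
      in (x1, x2, dx1, dx2)))"

text \<open>Shape variables
  (xbar1, xbar2, xbar1b1, xbar2b2, xtilde, rho, rho1b1, rho2b2, rhat1, rhat2, xhat1, xhat2).\<close>
type_synonym shape_vars =
  "real \<times> real \<times> real \<times> real \<times> real \<times> real \<times> real \<times> real \<times> real \<times> real \<times> real \<times> real"

definition shape :: "real \<Rightarrow> state \<Rightarrow> shape_vars" where
  "shape b s = (case s of (r1, r2, x1, x2) \<Rightarrow>
     (let r = r1 - r2; rho = norm r;
          r1b1 = r1 - beacon1 b; rho1b1 = norm r1b1;
          r2b2 = r2 - beacon2 b; rho2b2 = norm r2b2
      in ((x1 \<bullet> r) / rho, - (x2 \<bullet> r) / rho,
          (x1 \<bullet> r1b1) / rho1b1, (x2 \<bullet> r2b2) / rho2b2,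
          x1 \<bullet> x2, rho, rho1b1, rho2b2,
          r1 \<bullet> bhat b, r2 \<bullet> bhat b, x1 \<bullet> bhat b, x2 \<bullet> bhat b)))"

definition circling_equilibrium ::
  "real \<Rightarrow> real \<Rightarrow> real \<Rightarrow> real \<Rightarrow> real \<Rightarrow> state \<Rightarrow> bool" where
  "circling_equilibrium mu lam a a0 b s \<longleftrightarrow>
     (case s of (r1, r2, x1, x2) \<Rightarrow>
        norm x1 = 1 \<and> norm x2 = 1 \<and>
        norm (r1 - r2) > 0 \<and> norm (r1 - beacon1 b) > 0 \<and> norm (r2 - beacon2 b) > 0) \<and>
     ((\<lambda>t. shape b (s + t *\<^sub>R field mu lam a a0 b s)) has_vector_derivative 0) (at 0)"

end

theory Submission
  imports Defs
begin

(* With a0 = 0 the beacon bearings vanish at a circling equilibrium, so only the mutual-pursuit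
   term steers. Adding the rates of the two pursuit bearings forces the bearing X = x1.u along the
   unit line of sight u to satisfy X (1 - X^2) = 0; and X = +-1 would make the steering vanish,
   contradicting the rate of the beacon bearing, so X = 0. Both accelerations are then radial with
   coefficient (1 - lam) mu a, the line of sight is horizontal, and the two horizontal unit
   velocities orthogonal to it are (anti)parallel; the pursuit-bearing rate excludes parallel, and
   then reads (1 - lam) mu a rho = -2, which gives a < 0 and the value of rho. Conversely, two agents
   diametrically opposite on a horizontal circle of that diameter form a circling equilibrium. *)

unbundle cross3_syntax

lemma has_real_derivative_inner_line:
  fixes x x' c c' :: "'a::real_inner"
  shows "((\<lambda>t. (x + t *\<^sub>R x') \<bullet> (c + t *\<^sub>R c')) has_real_derivative (x' \<bullet> c + x \<bullet> c')) (at 0)"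
proof -
  have "(\<lambda>t. (x + t *\<^sub>R x') \<bullet> (c + t *\<^sub>R c')) = (\<lambda>t. x \<bullet> c + t * (x' \<bullet> c + x \<bullet> c') + t\<^sup>2 * (x' \<bullet> c'))"
    by (simp add: fun_eq_iff inner_add_left inner_add_right algebra_simps power2_eq_square)
  then show ?thesis
    by (auto intro!: derivative_eq_intros)
qed

lemma has_real_derivative_norm_line:
  fixes c c' :: "'a::real_inner"
  assumes "c \<noteq> 0"
  shows "((\<lambda>t. norm (c + t *\<^sub>R c')) has_real_derivative (c \<bullet> c' / norm c)) (at 0)"
proof -
  have "((\<lambda>t. sqrt ((c + t *\<^sub>R c') \<bullet> (c + t *\<^sub>R c'))) has_real_derivative
          inverse (sqrt (c \<bullet> c)) / 2 * (c' \<bullet> c + c \<bullet> c')) (at 0)"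
    using DERIV_chain2[OF DERIV_real_sqrt has_real_derivative_inner_line[of c c' c c']] assms
    by simp
  then show ?thesis
    using assms by (simp add: norm_eq_sqrt_inner[symmetric] inner_commute field_simps)
qed

definition bearing_derivative :: "'a::real_inner \<Rightarrow> 'a \<Rightarrow> 'a \<Rightarrow> 'a \<Rightarrow> real" where
  "bearing_derivative x x' c c' = (x' \<bullet> c + x \<bullet> c') / norm c - (x \<bullet> c) * (c \<bullet> c') / norm c ^ 3"

lemma has_real_derivative_bearing_line:
  fixes x x' c c' :: "'a::real_inner"
  assumes "c \<noteq> 0"
  shows "((\<lambda>t. (x + t *\<^sub>R x') \<bullet> (c + t *\<^sub>R c') / norm (c + t *\<^sub>R c')) has_real_derivative
          bearing_derivative x x' c c') (at 0)"
proof -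
  have "((x' \<bullet> c + x \<bullet> c') * norm c - (x \<bullet> c) * (c \<bullet> c' / norm c)) / (norm c * norm c)
        = bearing_derivative x x' c c'"
    using assms by (simp add: bearing_derivative_def field_simps power3_eq_cube)
  then show ?thesis
    using DERIV_divide[OF has_real_derivative_inner_line[of x x' c c']
                    has_real_derivative_norm_line[OF assms, of c']] assms
    by simp
qed

lemma shape_has_vector_derivative:
  fixes r1 r2 x1 x2 v1 v2 w1 w2 :: "real^3"
  assumes "r1 \<noteq> r2" and "r1 \<noteq> beacon1 b" and "r2 \<noteq> beacon2 b"
  shows "((\<lambda>t. shape b ((r1, r2, x1, x2) + t *\<^sub>R (v1, v2, w1, w2))) has_vector_derivative
    (bearing_derivative x1 w1 (r1 - r2) (v1 - v2), - bearing_derivative x2 w2 (r1 - r2) (v1 - v2),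
     bearing_derivative x1 w1 (r1 - beacon1 b) v1, bearing_derivative x2 w2 (r2 - beacon2 b) v2,
     w1 \<bullet> x2 + x1 \<bullet> w2,
     (r1 - r2) \<bullet> (v1 - v2) / norm (r1 - r2), (r1 - beacon1 b) \<bullet> v1 / norm (r1 - beacon1 b),
     (r2 - beacon2 b) \<bullet> v2 / norm (r2 - beacon2 b),
     v1 \<bullet> bhat b, v2 \<bullet> bhat b, w1 \<bullet> bhat b, w2 \<bullet> bhat b)) (at 0)"
proof -
  have moved: "r1 + t *\<^sub>R v1 - (r2 + t *\<^sub>R v2) = (r1 - r2) + t *\<^sub>R (v1 - v2)"
    "r1 + t *\<^sub>R v1 - c = (r1 - c) + t *\<^sub>R v1" "r2 + t *\<^sub>R v2 - c = (r2 - c) + t *\<^sub>R v2"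
    "- (x \<bullet> y) / z = - (x \<bullet> y / z)" for t :: real and c x y :: "real^3" and z :: real
    by (simp_all add: algebra_simps)
  have "(\<lambda>t. shape b ((r1, r2, x1, x2) + t *\<^sub>R (v1, v2, w1, w2))) = (\<lambda>t.
     ((x1 + t *\<^sub>R w1) \<bullet> ((r1 - r2) + t *\<^sub>R (v1 - v2)) / norm ((r1 - r2) + t *\<^sub>R (v1 - v2)),
      - ((x2 + t *\<^sub>R w2) \<bullet> ((r1 - r2) + t *\<^sub>R (v1 - v2)) / norm ((r1 - r2) + t *\<^sub>R (v1 - v2))),
      (x1 + t *\<^sub>R w1) \<bullet> ((r1 - beacon1 b) + t *\<^sub>R v1) / norm ((r1 - beacon1 b) + t *\<^sub>R v1),
      (x2 + t *\<^sub>R w2) \<bullet> ((r2 - beacon2 b) + t *\<^sub>R v2) / norm ((r2 - beacon2 b) + t *\<^sub>R v2),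
      (x1 + t *\<^sub>R w1) \<bullet> (x2 + t *\<^sub>R w2),
      norm ((r1 - r2) + t *\<^sub>R (v1 - v2)),
      norm ((r1 - beacon1 b) + t *\<^sub>R v1),
      norm ((r2 - beacon2 b) + t *\<^sub>R v2),
      (r1 + t *\<^sub>R v1) \<bullet> bhat b, (r2 + t *\<^sub>R v2) \<bullet> bhat b,
      (x1 + t *\<^sub>R w1) \<bullet> bhat b, (x2 + t *\<^sub>R w2) \<bullet> bhat b))"
    by (simp only: fun_eq_iff shape_def Let_def plus_prod_def scaleR_prod_def prod.case fst_conv snd_conv
        moved(1), simp only: moved(2-4), simp)
  moreover have "((\<lambda>t. (y + t *\<^sub>R y') \<bullet> bhat b) has_real_derivative y' \<bullet> bhat b) (at 0)" for y y' :: "real^3"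
    using has_real_derivative_inner_line[of y y' "bhat b" 0] by simp
  ultimately show ?thesis
    using assms
    by (simp only:) (intro has_vector_derivative_Pair has_real_derivative_iff_has_vector_derivative[THEN iffD1]
        has_real_derivative_bearing_line has_real_derivative_norm_line has_real_derivative_inner_line
        DERIV_minus; simp)
qed

lemma circling_equilibrium_iff:
  fixes r1 r2 x1 x2 w1 w2 :: "real^3"
  assumes field: "field mu lam a a0 b (r1, r2, x1, x2) = (x1, x2, w1, w2)"
  shows "circling_equilibrium mu lam a a0 b (r1, r2, x1, x2) \<longleftrightarrow>
    norm x1 = 1 \<and> norm x2 = 1 \<and> r1 \<noteq> r2 \<and> r1 \<noteq> beacon1 b \<and> r2 \<noteq> beacon2 b \<and>
    (r1 - r2) \<bullet> (x1 - x2) = 0 \<and> (r1 - beacon1 b) \<bullet> x1 = 0 \<and> (r2 - beacon2 b) \<bullet> x2 = 0 \<and>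
    w1 \<bullet> (r1 - r2) + x1 \<bullet> (x1 - x2) = 0 \<and> w2 \<bullet> (r1 - r2) + x2 \<bullet> (x1 - x2) = 0 \<and>
    w1 \<bullet> (r1 - beacon1 b) + x1 \<bullet> x1 = 0 \<and> w2 \<bullet> (r2 - beacon2 b) + x2 \<bullet> x2 = 0 \<and>
    w1 \<bullet> x2 + x1 \<bullet> w2 = 0 \<and>
    x1 \<bullet> bhat b = 0 \<and> x2 \<bullet> bhat b = 0 \<and> w1 \<bullet> bhat b = 0 \<and> w2 \<bullet> bhat b = 0"
  (is "_ \<longleftrightarrow> ?conditions")
proof (cases "r1 \<noteq> r2 \<and> r1 \<noteq> beacon1 b \<and> r2 \<noteq> beacon2 b")
  case False
  then show ?thesis
    by (auto simp: circling_equilibrium_def)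
next
  case True
  have "circling_equilibrium mu lam a a0 b (r1, r2, x1, x2) \<longleftrightarrow> norm x1 = 1 \<and> norm x2 = 1 \<and>
      ((\<lambda>t. shape b ((r1, r2, x1, x2) + t *\<^sub>R (x1, x2, w1, w2))) has_vector_derivative 0) (at 0)"
    using True by (simp add: circling_equilibrium_def field)
  also have "\<dots> \<longleftrightarrow> norm x1 = 1 \<and> norm x2 = 1 \<and>
    (bearing_derivative x1 w1 (r1 - r2) (x1 - x2), - bearing_derivative x2 w2 (r1 - r2) (x1 - x2),
     bearing_derivative x1 w1 (r1 - beacon1 b) x1, bearing_derivative x2 w2 (r2 - beacon2 b) x2,
     w1 \<bullet> x2 + x1 \<bullet> w2,
     (r1 - r2) \<bullet> (x1 - x2) / norm (r1 - r2), (r1 - beacon1 b) \<bullet> x1 / norm (r1 - beacon1 b),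
     (r2 - beacon2 b) \<bullet> x2 / norm (r2 - beacon2 b),
     x1 \<bullet> bhat b, x2 \<bullet> bhat b, w1 \<bullet> bhat b, w2 \<bullet> bhat b) = 0"
    using True shape_has_vector_derivative[of r1 r2 b x1 x2 x1 x2 w1 w2] vector_derivative_unique_at
    by metis
  also have "\<dots> \<longleftrightarrow> ?conditions"
    using True by (auto simp: zero_prod_def bearing_derivative_def inner_commute)
  finally show ?thesis .
qed

lemma field_of_zero_beacon_bearings:
  fixes r1 r2 x1 x2 :: "real^3"
  assumes "x1 \<bullet> (r1 - beacon1 b) = 0" and "x2 \<bullet> (r2 - beacon2 b) = 0"
  shows "field mu lam a 0 b (r1, r2, x1, x2) = (x1, x2,
    - ((1 - lam) * mu * (x1 \<bullet> (r1 - r2) / norm (r1 - r2) - a)) *\<^sub>R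
        ((1 / norm (r1 - r2)) *\<^sub>R (r1 - r2) - (x1 \<bullet> (r1 - r2) / norm (r1 - r2)) *\<^sub>R x1),
    - ((1 - lam) * mu * (- (x2 \<bullet> (r1 - r2)) / norm (r1 - r2) - a)) *\<^sub>R
        (- (1 / norm (r1 - r2)) *\<^sub>R (r1 - r2) - (- (x2 \<bullet> (r1 - r2)) / norm (r1 - r2)) *\<^sub>R x2))"
  using assms by (simp add: field_def Let_def inner_commute)

lemma beacon2_eq_axis: "beacon2 b = b *\<^sub>R axis 3 1"
  by (simp add: beacon2_def vec_eq_iff forall_3 axis_def)

lemma beacon1_eq_axis: "beacon1 b = - (b *\<^sub>R axis 3 1)"
  by (simp add: beacon1_def vec_eq_iff forall_3 axis_def)

lemma bhat_eq_axis: "bhat b = (2 * b) *\<^sub>R axis 3 1"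
  by (simp add: bhat_def beacon1_def beacon2_def vec_eq_iff forall_3 axis_def)

lemma inner_sq_eq_1_if_orthogonal_to_cross:
  fixes u v r e :: "real^3"
  assumes "norm u = 1" and "norm v = 1" and "r \<times> e \<noteq> 0"
    and "u \<bullet> r = 0" and "u \<bullet> e = 0" and "v \<bullet> r = 0" and "v \<bullet> e = 0"
  shows "(u \<bullet> v)\<^sup>2 = 1"
proof -
  define n where "n = r \<times> e"
  have "u \<times> n = 0" and "v \<times> n = 0"
    using assms by (simp_all add: n_def Lagrange)
  then have un: "(u \<bullet> n)\<^sup>2 = n \<bullet> n" and vn: "(v \<bullet> n)\<^sup>2 = n \<bullet> n"
    and uv: "(u \<bullet> v) * (n \<bullet> n) = (u \<bullet> n) * (v \<bullet> n)"
    using norm_cross[of u n] norm_cross[of v n] dot_cross[of u n v n] assms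
    by (simp_all add: inner_commute power2_norm_eq_inner)
  have "((u \<bullet> v) * (n \<bullet> n))\<^sup>2 = (n \<bullet> n)\<^sup>2"
    unfolding uv power_mult_distrib un vn by (simp add: power2_eq_square)
  moreover have "n \<bullet> n \<noteq> 0"
    using assms(3) by (simp add: n_def)
  ultimately show ?thesis
    by (simp add: power_mult_distrib)
qed

lemma norm_sq_beacon_offsets:
  fixes r1 r2 c :: "'a::real_inner"
  assumes "(r1 - r2) \<bullet> (r1 + r2) = 0" and "r1 \<bullet> c = r2 \<bullet> c"
  shows "(norm (r1 + c))\<^sup>2 - (norm (r2 - c))\<^sup>2 - 2 * (r1 \<bullet> (2 *\<^sub>R c)) = 0"
  using assms by (simp add: power2_norm_eq_inner inner_add_left inner_add_right inner_diff_left
      inner_diff_right inner_commute)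

lemma rejection_inner_unit:
  fixes u x :: "'a::real_inner"
  assumes "u \<bullet> u = 1" and "x \<bullet> x = 1"
  shows "(u - (x \<bullet> u) *\<^sub>R x) \<bullet> u = 1 - (x \<bullet> u)\<^sup>2"
    and "(u - (x \<bullet> u) *\<^sub>R x) \<bullet> (u - (x \<bullet> u) *\<^sub>R x) = 1 - (x \<bullet> u)\<^sup>2"
  using assms by (simp_all add: inner_diff_left inner_diff_right inner_commute power2_eq_square)

locale zero_beacon_bearing_equilibrium =
  fixes mu lam a b :: real and r1 r2 x1 x2 w1 w2 :: "real^3"
  assumes mu_pos: "0 < mu" and lam_less_1: "lam < 1" and b_pos: "0 < b"
    and field: "field mu lam a 0 b (r1, r2, x1, x2) = (x1, x2, w1, w2)"
    and equilibrium: "circling_equilibrium mu lam a 0 b (r1, r2, x1, x2)"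
begin

text \<open>\<open>u\<close> is the unit line of sight from agent 2 to agent 1, so \<open>X\<close> is the paper's
  \<open>x\<^sub>1\<close>-bar and, by \<open>bearings_eq\<close> below, \<open>- X\<close> is \<open>x\<^sub>2\<close>-bar.\<close>
definition "r = r1 - r2"
definition "p1 = r1 - beacon1 b"
definition "p2 = r2 - beacon2 b"
definition "\<rho> = norm r"
definition "u = (1 / \<rho>) *\<^sub>R r"
definition "k = (1 - lam) * mu"
definition "X = x1 \<bullet> u"

lemma
  shows norm_x1: "norm x1 = 1" and norm_x2: "norm x2 = 1"
    and r_nonzero: "r \<noteq> 0"
    and range_rate: "r \<bullet> (x1 - x2) = 0"
    and beacon_bearing1: "x1 \<bullet> p1 = 0" and beacon_bearing2: "x2 \<bullet> p2 = 0"
    and pursuit_bearing_rate1: "w1 \<bullet> r + 1 - x1 \<bullet> x2 = 0"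
    and pursuit_bearing_rate2: "w2 \<bullet> r + x1 \<bullet> x2 - 1 = 0"
    and beacon_bearing_rate1: "w1 \<bullet> p1 = -1" and beacon_bearing_rate2: "w2 \<bullet> p2 = -1"
    and vertical_rates: "x1 \<bullet> bhat b = 0" "x2 \<bullet> bhat b = 0" "w1 \<bullet> bhat b = 0"
  using equilibrium unfolding circling_equilibrium_iff[OF field] r_def p1_def p2_def
  by (auto simp: inner_diff_right inner_commute power2_norm_eq_inner[symmetric] algebra_simps)

lemma unit_x1: "x1 \<bullet> x1 = 1" and unit_x2: "x2 \<bullet> x2 = 1"
  using norm_x1 norm_x2 by (simp_all add: power2_norm_eq_inner[symmetric])

lemma rho_pos: "0 < \<rho>"
  using r_nonzero by (simp add: \<rho>_def)

lemma k_pos: "0 < k"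
  using mu_pos lam_less_1 by (simp add: k_def)

lemma r_eq: "r = \<rho> *\<^sub>R u" and unit_u: "u \<bullet> u = 1"
  using rho_pos by (simp_all add: u_def \<rho>_def power2_norm_eq_inner[symmetric] power2_eq_square)

lemma bearings_eq: "x1 \<bullet> u = X" "x2 \<bullet> u = X"
  using range_rate by (simp_all add: X_def u_def inner_diff_left inner_diff_right inner_commute)

lemma w1_eq: "w1 = - (k * (X - a)) *\<^sub>R (u - X *\<^sub>R x1)"
  and w2_eq: "w2 = - (k * (X + a)) *\<^sub>R (u - X *\<^sub>R x2)"
proof -
  have "w1 = - (k * (x1 \<bullet> u - a)) *\<^sub>R (u - (x1 \<bullet> u) *\<^sub>R x1)"
    and "w2 = - (k * (- (x2 \<bullet> u) - a)) *\<^sub>R (- u - (- (x2 \<bullet> u)) *\<^sub>R x2)"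
    using field_of_zero_beacon_bearings[OF beacon_bearing1[unfolded p1_def] beacon_bearing2[unfolded p2_def],
        where mu = mu and lam = lam and a = a]
    unfolding field by (simp_all add: k_def u_def \<rho>_def r_def)
  then show "w1 = - (k * (X - a)) *\<^sub>R (u - X *\<^sub>R x1)" "w2 = - (k * (X + a)) *\<^sub>R (u - X *\<^sub>R x2)"
    unfolding bearings_eq by (simp_all add: algebra_simps)
qed

lemma w_inner_u: "w1 \<bullet> u = - k * (X - a) * (1 - X\<^sup>2)" "w2 \<bullet> u = - k * (X + a) * (1 - X\<^sup>2)"
  using rejection_inner_unit(1)[OF unit_u unit_x1] rejection_inner_unit(1)[OF unit_u unit_x2]
  by (simp_all add: w1_eq w2_eq bearings_eq)

lemma bearing_cubic: "X * (1 - X\<^sup>2) = 0"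
proof -
  have "w1 \<bullet> r = \<rho> * (w1 \<bullet> u)" "w2 \<bullet> r = \<rho> * (w2 \<bullet> u)"
    by (simp_all add: r_eq)
  then have "\<rho> * (w1 \<bullet> u + w2 \<bullet> u) = 0"
    using pursuit_bearing_rate1 pursuit_bearing_rate2 by (simp add: distrib_left)
  then have "k * (X * (1 - X\<^sup>2)) = 0"
    using rho_pos by (simp add: w_inner_u algebra_simps)
  then show ?thesis
    using k_pos by simp
qed

text \<open>A nonzero bearing would be \<open>\<plusminus>1\<close>, i.e. the velocity \<open>x1\<close> would point along the line
  of sight; then the steering vanishes, contradicting the beacon bearing rate.\<close>
lemma bearing_zero: "X = 0"
proof (rule ccontr)
  assume "X \<noteq> 0"
  then have "1 - X\<^sup>2 = 0"
    using bearing_cubic by simp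
  then have "u - X *\<^sub>R x1 = 0"
    using rejection_inner_unit(2)[OF unit_u unit_x1] by (simp add: bearings_eq)
  then have "w1 = 0"
    by (simp add: w1_eq)
  then show False
    using beacon_bearing_rate1 by simp
qed

lemma velocities_orthogonal_r: "x1 \<bullet> r = 0" "x2 \<bullet> r = 0"
  using bearings_eq bearing_zero by (simp_all add: r_eq)

lemma w_radial: "w1 = (k * a) *\<^sub>R u" "w2 = - ((k * a) *\<^sub>R u)"
  by (simp_all add: w1_eq w2_eq bearing_zero)

lemma
  shows ka_nonzero: "k * a \<noteq> 0" and u_inner_p_sum: "u \<bullet> (p1 + p2) = 0"
proof -
  have p1: "k * a * (u \<bullet> p1) = -1" and p2: "k * a * (u \<bullet> p2) = 1"
    using beacon_bearing_rate1 beacon_bearing_rate2 by (simp_all add: w_radial)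
  then show "k * a \<noteq> 0"
    by auto
  have "k * a * (u \<bullet> (p1 + p2)) = 0"
    using p1 p2 by (simp add: inner_add_right distrib_left)
  then show "u \<bullet> (p1 + p2) = 0"
    using \<open>k * a \<noteq> 0\<close> by simp
qed

lemma pursuit_rate_radial: "k * a * \<rho> + 1 - x1 \<bullet> x2 = 0"
  using pursuit_bearing_rate1 unit_u by (simp add: w_radial r_eq algebra_simps)

lemma r_orthogonal_bhat: "r \<bullet> bhat b = 0"
  using vertical_rates(3) ka_nonzero by (simp add: w_radial r_eq)

lemma x1_inner_x2: "x1 \<bullet> x2 = -1"
proof -
  have "(norm (r \<times> bhat b))\<^sup>2 = (norm r)\<^sup>2 * (norm (bhat b))\<^sup>2"
    using norm_cross[of r "bhat b"] r_orthogonal_bhat by simp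
  moreover have "0 < (norm r)\<^sup>2 * (norm (bhat b))\<^sup>2"
    using r_nonzero b_pos by (simp add: bhat_eq_axis)
  ultimately have "r \<times> bhat b \<noteq> 0"
    by auto
  then have "(x1 \<bullet> x2)\<^sup>2 = 1"
    using inner_sq_eq_1_if_orthogonal_to_cross[OF norm_x1 norm_x2] velocities_orthogonal_r vertical_rates
    by blast
  moreover have "x1 \<bullet> x2 \<noteq> 1"
    using pursuit_rate_radial ka_nonzero rho_pos by auto
  ultimately show ?thesis
    by (auto simp: power2_eq_1_iff)
qed

lemma
  shows a_neg: "a < 0" and rho_eq: "\<rho> = 2 / ((1 - lam) * mu * (- a))"
proof -
  have ka_rho: "k * a * \<rho> = -2"
    using pursuit_rate_radial x1_inner_x2 by simp
  show "a < 0"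
  proof (rule ccontr)
    assume "\<not> a < 0"
    then have "0 \<le> k * a * \<rho>"
      using k_pos rho_pos by simp
    then show False
      using ka_rho by simp
  qed
  show "\<rho> = 2 / ((1 - lam) * mu * (- a))"
    using ka_rho ka_nonzero unfolding k_def[symmetric] by (simp add: field_simps)
qed

lemma heights_eq: "r1 \<bullet> bhat b = r2 \<bullet> bhat b"
  using r_orthogonal_bhat by (simp add: r_def inner_diff_left)

lemma beacon_distances: "(norm p1)\<^sup>2 - (norm p2)\<^sup>2 - 2 * (r1 \<bullet> bhat b) = 0"
proof -
  define c :: "real^3" where "c = b *\<^sub>R axis 3 1"
  have p: "p1 = r1 + c" "p2 = r2 - c" and bhat: "bhat b = 2 *\<^sub>R c"
    by (simp_all add: p1_def p2_def c_def beacon1_eq_axis beacon2_eq_axis bhat_eq_axis)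
  have "(r1 - r2) \<bullet> (r1 + r2) = 0"
    using u_inner_p_sum by (simp add: p r_def[symmetric] r_eq)
  moreover have "r1 \<bullet> c = r2 \<bullet> c"
    using heights_eq by (simp add: bhat)
  ultimately have "(norm (r1 + c))\<^sup>2 - (norm (r2 - c))\<^sup>2 - 2 * (r1 \<bullet> (2 *\<^sub>R c)) = 0"
    by (rule norm_sq_beacon_offsets)
  then show ?thesis
    by (simp only: p bhat)
qed

lemma shape_eq: "shape b (r1, r2, x1, x2) =
    (0, 0, 0, 0, -1, 2 / ((1 - lam) * mu * (- a)), norm p1, norm p2, r1 \<bullet> bhat b, r2 \<bullet> bhat b, 0, 0)"
  using velocities_orthogonal_r beacon_bearing1 beacon_bearing2 x1_inner_x2 rho_eq vertical_rates
  by (simp add: shape_def Let_def r_def p1_def p2_def \<rho>_def)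

end

text \<open>The witness: the agents sit diametrically opposite on a horizontal circle of diameter
  \<open>\<rho>\<close> centred between the beacons and move in opposite directions along it.\<close>
lemma circling_equilibrium_exists:
  assumes "0 < mu" and "lam < 1" and "a < 0"
  shows "\<exists>s. circling_equilibrium mu lam a 0 b s"
proof -
  define k where "k = (1 - lam) * mu"
  define \<rho> where "\<rho> = 2 / (k * (- a))"
  have k_pos: "0 < k"
    using assms by (simp add: k_def)
  then have rho_pos: "0 < \<rho>" and ka_rho: "k * a * \<rho> = -2"
    using assms by (simp_all add: \<rho>_def field_simps mult_neg_pos)
  define r1 r2 x1 x2 w1 w2 :: "real^3"
    where "r1 = vector [\<rho> / 2, 0, 0]" and "r2 = vector [- \<rho> / 2, 0, 0]"
      and "x1 = vector [0, 1, 0]" and "x2 = vector [0, -1, 0]"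
      and "w1 = vector [k * a, 0, 0]" and "w2 = vector [- k * a, 0, 0]"
  note coordinates = r1_def r2_def x1_def x2_def w1_def w2_def beacon1_def beacon2_def bhat_def
    inner_vec_def sum_3 vec_eq_iff forall_3
  have norm_r: "norm (r1 - r2) = \<rho>"
    using rho_pos by (simp add: norm_eq_sqrt_inner coordinates)
  have "x1 \<bullet> (r1 - beacon1 b) = 0" "x2 \<bullet> (r2 - beacon2 b) = 0"
    by (simp_all add: coordinates)
  from field_of_zero_beacon_bearings[OF this, of mu lam a]
  have field: "field mu lam a 0 b (r1, r2, x1, x2) = (x1, x2, w1, w2)"
    using rho_pos unfolding norm_r by (simp add: k_def coordinates)
  have "norm x1 = 1" "norm x2 = 1" "r1 \<noteq> r2" "r1 \<noteq> beacon1 b" "r2 \<noteq> beacon2 b"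
    using rho_pos by (simp_all add: norm_eq_sqrt_inner coordinates)
  then have "circling_equilibrium mu lam a 0 b (r1, r2, x1, x2)"
    unfolding circling_equilibrium_iff[OF field] using ka_rho
    by (simp add: coordinates algebra_simps)
  then show ?thesis
    by blast
qed

theorem proposition5p2:
  fixes mu lam a b :: real
  assumes "b > 0" and "mu > 0" and "0 < lam" and "lam < 1"
    and "-1 \<le> a" and "a \<le> 1"
  shows "((\<exists>s. circling_equilibrium mu lam a 0 b s) \<longleftrightarrow> a < 0) \<and>
    (\<forall>r1 r2 x1 x2. circling_equilibrium mu lam a 0 b (r1, r2, x1, x2) \<longrightarrow>
       (\<exists>rho1b1 rho2b2 rh1 rh2.
          shape b (r1, r2, x1, x2) =
            (0, 0, 0, 0, -1, 2 / ((1 - lam) * mu * (- a)), rho1b1, rho2b2, rh1, rh2, 0, 0) \<and>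
          rh1 = rh2 \<and> rho1b1\<^sup>2 - rho2b2\<^sup>2 - 2 * rh1 = 0))"
proof -
  have equilibrium_shape: "a < 0 \<and> (\<exists>rho1b1 rho2b2 rh1 rh2.
          shape b (r1, r2, x1, x2) =
            (0, 0, 0, 0, -1, 2 / ((1 - lam) * mu * (- a)), rho1b1, rho2b2, rh1, rh2, 0, 0) \<and>
          rh1 = rh2 \<and> rho1b1\<^sup>2 - rho2b2\<^sup>2 - 2 * rh1 = 0)"
    if "circling_equilibrium mu lam a 0 b (r1, r2, x1, x2)" for r1 r2 x1 x2
  proof -
    obtain w1 w2 where "field mu lam a 0 b (r1, r2, x1, x2) = (x1, x2, w1, w2)"
      by (simp add: field_def Let_def)
    then interpret zero_beacon_bearing_equilibrium mu lam a b r1 r2 x1 x2 w1 w2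
      using assms that by unfold_locales
    show ?thesis
      using a_neg shape_eq heights_eq beacon_distances by blast
  qed
  show ?thesis
    using equilibrium_shape circling_equilibrium_exists[of mu lam a b] assms
    by (metis prod_cases4)
qed

end
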